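(* For every $U\in\mathcal U_n$, the part listing $\tilde p(U)$ is the minimal part listing for $U$ with respect to graded reverse lexicographic order.
   Context: A unit interval order on $\{1,\dots,n\}$ is given by closed intervals $I_1,\dots,I_n$ of length $1$, numbered from left to right, with $i\prec j$ iff $I_i$ lies strictly to the left of $I_j$; $\mathcal U_n$ is the set of these. For a sequence $w=(w_1,\dots,w_n)$ of nonnegative integers, $P(w)$ is the poset on $\{1,\dots,n\}$ with $i\prec j$ iff $w_j-w_i\ge2$, or $w_j-w_i=1$ and $i<j$; $w$ is a part listing for $U$ if $P(w)$ is isomorphic to $U$. Area sequences of Dyck paths of length $n$ are the sequences of nonnegative integers with $a_1=0$ and $a_i\le a_{i-1}+1$. For each $U$ there is a unique part listing for $U$ that is the area sequence of a Dyck path; it is denoted $\tilde p(U)$. Graded reverse lexicographic order: $(a_1,\dots,a_n)<(b_1,\dots,b_n)$ if $\sum a_i<\sum b_i$, or if the sums are equal and $a_j>b_j$ where $j$ is the first index where they differ. *)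

theory Defs
  imports Complex_Main
begin

text \<open>Posets on the ground set {1..n} are represented by their strict order
relation, a predicate on nat; only arguments in {1..n} are meaningful.
Sequences (w_1,...,w_n) are lists of length n, with w_i = w ! (i - 1).\<close>

text \<open>Unit interval orders on {1..n}: closed unit intervals [x_i, x_i + 1],
numbered from left to right (x_1 \<le> ... \<le> x_n), with i \<prec> j iff interval i
lies strictly to the left of interval j, i.e. x_i + 1 < x_j.\<close>
definition unit_interval_orders :: "nat \<Rightarrow> (nat \<Rightarrow> nat \<Rightarrow> bool) set" where
  "unit_interval_orders n =
     {R. \<exists>x :: nat \<Rightarrow> real.
           (\<forall>i j. 1 \<le> i \<longrightarrow> i \<le> j \<longrightarrow> j \<le> n \<longrightarrow> x i \<le> x j) \<and>
           (\<forall>i j. R i j \<longleftrightarrow> (i \<in> {1..n} \<and> j \<in> {1..n} \<and> x i + 1 < x j))}"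

definition P_of :: "nat list \<Rightarrow> nat \<Rightarrow> nat \<Rightarrow> bool" where
  "P_of w i j \<longleftrightarrow> i \<in> {1..length w} \<and> j \<in> {1..length w} \<and>
     (int (w ! (j - 1)) - int (w ! (i - 1)) \<ge> 2 \<or>
      (int (w ! (j - 1)) - int (w ! (i - 1)) = 1 \<and> i < j))"

definition poset_iso :: "nat \<Rightarrow> (nat \<Rightarrow> nat \<Rightarrow> bool) \<Rightarrow> (nat \<Rightarrow> nat \<Rightarrow> bool) \<Rightarrow> bool" where
  "poset_iso n R S \<longleftrightarrow> (\<exists>f. bij_betw f {1..n} {1..n} \<and>
      (\<forall>i\<in>{1..n}. \<forall>j\<in>{1..n}. R i j \<longleftrightarrow> S (f i) (f j)))"

definition part_listing :: "nat \<Rightarrow> nat list \<Rightarrow> (nat \<Rightarrow> nat \<Rightarrow> bool) \<Rightarrow> bool" where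
  "part_listing n w U \<longleftrightarrow> length w = n \<and> poset_iso n (P_of w) U"

definition area_seq :: "nat \<Rightarrow> nat list \<Rightarrow> bool" where
  "area_seq n a \<longleftrightarrow> length a = n \<and> (n > 0 \<longrightarrow> a ! 0 = 0) \<and>
     (\<forall>i. 0 < i \<and> i < n \<longrightarrow> a ! i \<le> a ! (i - 1) + 1)"

definition p_tilde :: "nat \<Rightarrow> (nat \<Rightarrow> nat \<Rightarrow> bool) \<Rightarrow> nat list" where
  "p_tilde n U = (THE w. area_seq n w \<and> part_listing n w U)"

definition grevlex_less :: "nat list \<Rightarrow> nat list \<Rightarrow> bool" where
  "grevlex_less a b \<longleftrightarrow> length a = length b \<and>
     (sum_list a < sum_list b \<or>
      (sum_list a = sum_list b \<and>
       (\<exists>j < length a. a ! j > b ! j \<and> (\<forall>k < j. a ! k = b ! k))))"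

end

theory Submission
  imports Defs "HOL-Library.List_Lexorder"
begin

text \<open>
Let a be an area sequence and w another part listing of the same poset, and
read an isomorphism from P(w) to P(a) as a relabelling g of positions. An entry h > 0 of an
area sequence is preceded by an entry h - 1, which lies below it in P(a); by induction on h
this gives w_i \<ge> a_(g i), so w has the larger sum, with equality only if w_i = a_(g i) for
all i. In the equal-sum case g preserves the order of positions carrying adjacent values,
and counting the entries one below w_j before the first position j where w and a differ
shows a_j > w_j. Hence an area-sequence part listing is the grevlex minimum, and in
particular unique.

In a unit interval order the elements below y form an initial segment
{1..p(y)}, where p(y) < y and p is monotone. Then p is the parent map of a forest, and the
depths of its vertices, listed in depth-first preorder, form an area sequence that is a
part listing.
\<close>

section \<open>Area-sequence part listings are grevlex-minimal\<close>

definition part_prec :: "nat list \<Rightarrow> nat \<Rightarrow> nat \<Rightarrow> bool" where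
  "part_prec w i j \<longleftrightarrow> i < length w \<and> j < length w \<and>
     (w ! i + 2 \<le> w ! j \<or> (w ! j = w ! i + 1 \<and> i < j))"

lemma P_of_iff_part_prec: "P_of w i j \<longleftrightarrow> 1 \<le> i \<and> 1 \<le> j \<and> part_prec w (i - 1) (j - 1)"
  unfolding P_of_def part_prec_def by auto

lemma poset_iso_sym:
  assumes "poset_iso n R S"
  shows "poset_iso n S R"
proof -
  obtain f where f: "bij_betw f {1..n} {1..n}"
    and iso: "\<forall>i\<in>{1..n}. \<forall>j\<in>{1..n}. R i j \<longleftrightarrow> S (f i) (f j)"
    using assms unfolding poset_iso_def by blast
  let ?g = "inv_into {1..n} f"
  have g: "bij_betw ?g {1..n} {1..n}" using f by (rule bij_betw_inv_into)
  moreover have "S i j \<longleftrightarrow> R (?g i) (?g j)" if "i \<in> {1..n}" "j \<in> {1..n}" for i j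
  proof -
    have "?g i \<in> {1..n}" "?g j \<in> {1..n}" using bij_betw_apply[OF g] that by auto
    with iso that f show ?thesis by (simp add: bij_betw_inv_into_right)
  qed
  ultimately show ?thesis unfolding poset_iso_def by blast
qed

lemma poset_iso_trans:
  assumes "poset_iso n R S" "poset_iso n S T"
  shows "poset_iso n R T"
proof -
  obtain f where f: "bij_betw f {1..n} {1..n}"
    and iso_f: "\<forall>i\<in>{1..n}. \<forall>j\<in>{1..n}. R i j \<longleftrightarrow> S (f i) (f j)"
    using assms(1) unfolding poset_iso_def by blast
  obtain g where g: "bij_betw g {1..n} {1..n}"
    and iso_g: "\<forall>i\<in>{1..n}. \<forall>j\<in>{1..n}. S i j \<longleftrightarrow> T (g i) (g j)"
    using assms(2) unfolding poset_iso_def by blast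
  have "bij_betw (g \<circ> f) {1..n} {1..n}" using f g by (rule bij_betw_trans)
  moreover have "R i j \<longleftrightarrow> T ((g \<circ> f) i) ((g \<circ> f) j)" if "i \<in> {1..n}" "j \<in> {1..n}" for i j
    using that iso_f iso_g bij_betw_apply[OF f] by simp
  ultimately show ?thesis unfolding poset_iso_def by blast
qed

lemma poset_iso_P_of_part_prec:
  assumes "poset_iso n (P_of w) (P_of a)"
  shows "\<exists>g. bij_betw g {..<n} {..<n} \<and>
           (\<forall>i<n. \<forall>k<n. part_prec w i k \<longleftrightarrow> part_prec a (g i) (g k))"
proof -
  obtain f where f: "bij_betw f {1..n} {1..n}"
    and iso: "\<forall>i\<in>{1..n}. \<forall>j\<in>{1..n}. P_of w i j \<longleftrightarrow> P_of a (f i) (f j)"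
    using assms unfolding poset_iso_def by blast
  have "bij_betw Suc {..<n} {1..n}" by (simp add: image_Suc_lessThan)
  moreover have "bij_betw (\<lambda>x. x - 1) {1..n} {..<n}"
    by (rule bij_betw_byWitness[where f' = Suc]) auto
  ultimately have "bij_betw ((\<lambda>x. x - 1) \<circ> f \<circ> Suc) {..<n} {..<n}"
    using f by (blast intro: bij_betw_trans)
  moreover have "part_prec w i k \<longleftrightarrow> part_prec a (f (Suc i) - 1) (f (Suc k) - 1)"
    if "i < n" "k < n" for i k
    using iso[rule_format, of "Suc i" "Suc k"] that bij_betw_apply[OF f, of "Suc i"]
      bij_betw_apply[OF f, of "Suc k"]
    by (simp add: P_of_iff_part_prec)
  ultimately show ?thesis by auto
qed

lemma area_seq_intermediate_value:
  assumes "area_seq n a" "j \<le> p" "p < n" "a ! j \<le> v" "v < a ! p"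
  shows "\<exists>q. j \<le> q \<and> q < p \<and> a ! q = v"
  using assms(2-5)
proof (induction p)
  case 0
  then show ?case by simp
next
  case (Suc p)
  have "a ! Suc p \<le> a ! p + 1"
    using assms(1) Suc.prems(2) unfolding area_seq_def by (metis diff_Suc_1 zero_less_Suc)
  with Suc.prems have "j \<le> p" "v \<le> a ! p" by (auto simp: le_Suc_eq)
  then show ?case
    using Suc.IH Suc.prems by (cases "v = a ! p") (auto intro: less_SucI)
qed

lemma grevlex_less_asym: "grevlex_less a b \<Longrightarrow> \<not> grevlex_less b a"
  unfolding grevlex_less_def by (metis less_asym linorder_neqE_nat)

locale part_listing_relabelling =
  fixes n :: nat and a w :: "nat list" and g :: "nat \<Rightarrow> nat"
  assumes area: "area_seq n a"
    and length_w: "length w = n"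
    and bij: "bij_betw g {..<n} {..<n}"
    and prec_iff: "\<And>i k. i < n \<Longrightarrow> k < n \<Longrightarrow> part_prec w i k \<longleftrightarrow> part_prec a (g i) (g k)"
begin

lemma length_a: "length a = n"
  using area unfolding area_seq_def by simp

lemma g_less: "i < n \<Longrightarrow> g i < n"
  using bij_betw_apply[OF bij] by simp

lemma g_surj:
  assumes "q < n"
  obtains i where "i < n" "g i = q"
  using assms bij_betw_imp_surj_on[OF bij] by (metis imageE lessThan_iff)

lemma area_le: "i < n \<Longrightarrow> a ! g i \<le> w ! i"
proof (induction "a ! g i" arbitrary: i rule: less_induct)
  case less
  show ?case
  proof (cases "a ! g i = 0")
    case False
    have "a ! 0 = 0" using area less.prems unfolding area_seq_def by simp
    then obtain q where q: "q < g i" "a ! q = a ! g i - 1"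
      using area_seq_intermediate_value[OF area, of 0 "g i" "a ! g i - 1"] g_less less.prems False
      by auto
    then have "q < n" using g_less[OF less.prems] by simp
    then obtain k where k: "k < n" "g k = q" by (rule g_surj)
    have "part_prec a (g k) (g i)"
      unfolding part_prec_def using k q g_less[OF less.prems] length_a False by auto
    then have "w ! k + 1 \<le> w ! i"
      using prec_iff[OF k(1) less.prems] unfolding part_prec_def by auto
    moreover have "a ! g k \<le> w ! k"
      using less.hyps[OF _ k(1)] k q False by simp
    ultimately show ?thesis using k q by simp
  qed simp
qed

lemma sum_list_reindex: "sum_list a = (\<Sum>i<n. a ! g i)"
  using sum.reindex_bij_betw[OF bij, of "(!) a"] length_a
  by (simp add: sum_list_sum_nth atLeast0LessThan)

lemma sum_list_less:
  assumes "i < n" "a ! g i < w ! i"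
  shows "sum_list a < sum_list w"
proof -
  have "(\<Sum>i<n. a ! g i) < (\<Sum>i<n. w ! i)"
    using assms area_le by (intro sum_strict_mono_ex1) auto
  then show ?thesis
    unfolding sum_list_reindex using length_w by (simp add: sum_list_sum_nth atLeast0LessThan)
qed

end

locale level_preserving_relabelling = part_listing_relabelling +
  assumes level: "\<And>i. i < n \<Longrightarrow> w ! i = a ! g i"
begin

lemma sum_list_eq: "sum_list a = sum_list w"
  unfolding sum_list_reindex using length_w level by (simp add: sum_list_sum_nth atLeast0LessThan)

lemma adjacent_level_order:
  assumes "i < n" "k < n" "w ! k = w ! i + 1"
  shows "i < k \<longleftrightarrow> g i < g k"
proof -
  have "part_prec w i k \<longleftrightarrow> i < k"
    unfolding part_prec_def using assms length_w by auto
  moreover have "part_prec a (g i) (g k) \<longleftrightarrow> g i < g k"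
    unfolding part_prec_def using assms length_a g_less level by auto
  ultimately show ?thesis using prec_iff[OF assms(1,2)] by simp
qed

lemma card_prev_level_before_le:
  assumes "i < n" "0 < w ! i"
  shows "card {q. q < g i \<and> a ! q = w ! i - 1} \<le> card {s. s < i \<and> w ! s = w ! i - 1}"
proof -
  let ?B = "{s. s < i \<and> w ! s = w ! i - 1}"
  have "{q. q < g i \<and> a ! q = w ! i - 1} \<subseteq> g ` ?B"
  proof
    fix q assume q: "q \<in> {q. q < g i \<and> a ! q = w ! i - 1}"
    then have "q < n" using g_less[OF assms(1)] by simp
    then obtain s where s: "s < n" "g s = q" by (rule g_surj)
    then have "w ! s = w ! i - 1" using q level by simp
    then have "s < i" using adjacent_level_order[OF s(1) assms(1)] assms(2) q s by simp
    then show "q \<in> g ` ?B" using s \<open>w ! s = w ! i - 1\<close> by blast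
  qed
  then have "card {q. q < g i \<and> a ! q = w ! i - 1} \<le> card (g ` ?B)"
    by (rule card_mono[rotated]) simp
  also have "\<dots> \<le> card ?B" by (rule card_image_le) simp
  finally show ?thesis .
qed

lemma exists_same_level_image_ge:
  assumes "j < n" "\<And>k. k < j \<Longrightarrow> w ! k = a ! k"
  shows "\<exists>i\<le>j. w ! i = w ! j \<and> j \<le> g i"
proof (rule ccontr)
  let ?A = "{i. i \<le> j \<and> w ! i = w ! j}"
  assume no_late: "\<not> ?thesis"
  have "g i \<in> ?A - {j}" if "i \<in> ?A" for i
  proof -
    have "g i < j" "i < n" using no_late that assms(1) by auto
    have "w ! g i = a ! g i" using assms(2)[OF \<open>g i < j\<close>] .
    also have "\<dots> = w ! j" using level[OF \<open>i < n\<close>] that by simp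
    finally show ?thesis using \<open>g i < j\<close> by simp
  qed
  then have "g ` ?A \<subseteq> ?A - {j}" by blast
  moreover have "inj_on g ?A"
    using bij_betw_imp_inj_on[OF bij] by (rule inj_on_subset) (use assms(1) in auto)
  ultimately have "card ?A \<le> card (?A - {j})"
    by (intro card_inj_on_le) auto
  moreover have "card (?A - {j}) < card ?A"
    by (rule card_Diff1_less) auto
  ultimately show False by simp
qed

lemma first_difference_less:
  assumes "j < n" "\<And>k. k < j \<Longrightarrow> w ! k = a ! k" "w ! j \<noteq> a ! j"
  shows "w ! j < a ! j"
proof (rule ccontr)
  assume "\<not> w ! j < a ! j"
  with assms(3) have less: "a ! j < w ! j" by simp
  obtain i where i: "i \<le> j" "w ! i = w ! j" "j \<le> g i"
    using exists_same_level_image_ge[OF assms(1,2)] by blast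
  have "i < n" using i assms(1) by simp
  have "a ! j \<le> w ! j - 1" "w ! j - 1 < a ! g i"
    using less level[OF \<open>i < n\<close>] i(2) by auto
  then obtain q where q: "j \<le> q" "q < g i" "a ! q = w ! j - 1"
    using area_seq_intermediate_value[OF area i(3) g_less[OF \<open>i < n\<close>]] by blast
  let ?C = "{q. q < g i \<and> a ! q = w ! j - 1}"
  let ?D = "{s. s < j \<and> a ! s = w ! j - 1}"
  have "?D \<subseteq> ?C" using i(3) by auto
  moreover have "q \<in> ?C" "q \<notin> ?D" using q by auto
  ultimately have "?D \<subset> ?C" by blast
  then have "card ?D < card ?C"
    by (rule psubset_card_mono[rotated]) simp
  also have "\<dots> \<le> card {s. s < i \<and> w ! s = w ! j - 1}"
    using card_prev_level_before_le[OF \<open>i < n\<close>] i(2) less by simp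
  also have "\<dots> \<le> card ?D"
  proof (rule card_mono)
    show "{s. s < i \<and> w ! s = w ! j - 1} \<subseteq> ?D"
      using i(1) assms(2) by fastforce
  qed simp
  finally show False by simp
qed

end

lemma (in part_listing_relabelling) eq_or_grevlex_less: "w = a \<or> grevlex_less a w"
proof (cases "\<exists>i<n. a ! g i < w ! i")
  case True
  then have "sum_list a < sum_list w" using sum_list_less by blast
  then show ?thesis unfolding grevlex_less_def using length_a length_w by simp
next
  case False
  then interpret level_preserving_relabelling n a w g
    using area_le by unfold_locales (meson le_antisym not_le)
  show ?thesis
  proof (cases "w = a")
    case False
    then have "\<exists>j. j < n \<and> w ! j \<noteq> a ! j"
      using length_a length_w by (simp add: list_eq_iff_nth_eq)
    then obtain j where j: "j < n" "w ! j \<noteq> a ! j"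
      and least: "\<forall>k<j. \<not> (k < n \<and> w ! k \<noteq> a ! k)"
      unfolding exists_least_iff[of "\<lambda>j. j < n \<and> w ! j \<noteq> a ! j"] by blast
    have before: "w ! k = a ! k" if "k < j" for k
      using least that j(1) by simp
    with j have "w ! j < a ! j" by (intro first_difference_less)
    then show ?thesis
      unfolding grevlex_less_def using j before length_a length_w sum_list_eq by auto
  qed simp
qed

lemma area_part_listing_minimal:
  assumes "area_seq n a" "part_listing n a U" "part_listing n w U"
  shows "w = a \<or> grevlex_less a w"
proof -
  have "poset_iso n (P_of w) (P_of a)"
    using assms(2,3) unfolding part_listing_def by (blast intro: poset_iso_trans poset_iso_sym)
  then obtain g where "bij_betw g {..<n} {..<n}"
    and "\<forall>i<n. \<forall>k<n. part_prec w i k \<longleftrightarrow> part_prec a (g i) (g k)"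
    by (blast dest: poset_iso_P_of_part_prec)
  then interpret part_listing_relabelling n a w g
    using assms unfolding part_listing_def by unfold_locales simp_all
  show ?thesis by (rule eq_or_grevlex_less)
qed

lemma p_tilde_eqI:
  assumes "area_seq n a" "part_listing n a U"
  shows "p_tilde n U = a"
  unfolding p_tilde_def
proof (rule the_equality)
  show "area_seq n a \<and> part_listing n a U" using assms by simp
  fix b assume "area_seq n b \<and> part_listing n b U"
  then show "b = a"
    using area_part_listing_minimal[OF assms] area_part_listing_minimal[of n b U a] assms
      grevlex_less_asym by blast
qed

section \<open>Depth sequences of forests\<close>

lemma less_append_single: "(xs :: 'a :: linorder list) < xs @ [y]"
  by (simp add: list_less_def lexord_append_rightI)

lemma append_less_append_iff: "(xs @ ys :: 'a :: linorder list) < xs @ zs \<longleftrightarrow> ys < zs"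
  by (simp add: list_less_def irrefl_def)

lemma append_less_appendI:
  fixes xs ys :: "'a :: linorder list"
  assumes "xs < ys" "length ys \<le> length xs"
  shows "xs @ zs < ys @ ws"
  using assms by (simp add: list_less_def lexord_sufI)

text \<open>The guard \<open>y \<le> p y\<close> only serves termination; it never fires in \<open>parent_forest\<close>.\<close>

function root_path :: "(nat \<Rightarrow> nat) \<Rightarrow> nat \<Rightarrow> nat list" where
  "root_path p y = (if p y = 0 \<or> y \<le> p y then [y] else root_path p (p y) @ [y])"
  by pat_completeness auto
termination by (relation "measure (\<lambda>(p, y). y)") auto

declare root_path.simps [simp del]

locale parent_forest =
  fixes n :: nat and p :: "nat \<Rightarrow> nat"
  assumes parent_less: "0 < p y \<Longrightarrow> p y < y"
    and parent_mono: "1 \<le> y \<Longrightarrow> y \<le> y' \<Longrightarrow> y' \<le> n \<Longrightarrow> p y \<le> p y'"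
begin

lemma root_path_eq: "root_path p y = (if p y = 0 then [y] else root_path p (p y) @ [y])"
  using root_path.simps[of p y] parent_less[of y] by auto

lemma last_root_path: "last (root_path p y) = y"
  by (subst root_path_eq) simp

lemma root_path_inj: "root_path p u = root_path p v \<Longrightarrow> u = v"
  by (metis last_root_path)

definition depth :: "nat \<Rightarrow> nat" where
  "depth y = length (root_path p y) - 1"

lemma length_root_path: "length (root_path p y) = Suc (depth y)"
  unfolding depth_def by (subst (1 2) root_path_eq) simp

lemma depth_root: "p y = 0 \<Longrightarrow> depth y = 0"
  using length_root_path[of y] root_path_eq[of y] by simp

lemma depth_parent: "p y \<noteq> 0 \<Longrightarrow> depth y = Suc (depth (p y))"
  using length_root_path[of y] length_root_path[of "p y"] root_path_eq[of y] by simp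

lemma depth_eq_0_iff: "depth y = 0 \<longleftrightarrow> p y = 0"
  by (cases "p y = 0") (simp_all add: depth_root depth_parent)

lemma depth_mono: "1 \<le> u \<Longrightarrow> u \<le> v \<Longrightarrow> v \<le> n \<Longrightarrow> depth u \<le> depth v"
proof (induction v arbitrary: u rule: less_induct)
  case (less v)
  show ?case
  proof (cases "p u = 0")
    case False
    have "p u \<le> p v" using parent_mono less.prems by blast
    with False have "p v < v" using parent_less by simp
    then have "depth (p u) \<le> depth (p v)"
      using less.IH \<open>p u \<le> p v\<close> False less.prems by simp
    then show ?thesis using depth_parent[of u] depth_parent[of v] False \<open>p u \<le> p v\<close> by simp
  qed (simp add: depth_root)
qed

lemma depth_less_if_le_parent:
  assumes "1 \<le> u" "u \<le> p y" "y \<le> n"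
  shows "depth u < depth y"
proof -
  have "p y < y" using assms parent_less by simp
  then have "depth u \<le> depth (p y)" using assms depth_mono by simp
  then show ?thesis using assms depth_parent[of y] by simp
qed

lemma le_parent_if_depth_ge:
  assumes "1 \<le> u" "u \<le> n" "depth u + 2 \<le> depth y"
  shows "u \<le> p y"
proof (rule ccontr)
  assume "\<not> u \<le> p y"
  moreover have "p y \<noteq> 0" using assms(3) depth_root[of y] by auto
  ultimately have "depth (p y) \<le> depth u" using assms depth_mono by simp
  then show False using assms(3) depth_parent[of y] \<open>p y \<noteq> 0\<close> by simp
qed

lemma root_path_less_if_same_depth:
  "depth u = depth v \<Longrightarrow> 1 \<le> u \<Longrightarrow> u < v \<Longrightarrow> v \<le> n \<Longrightarrow> root_path p u < root_path p v"
proof (induction "depth u" arbitrary: u v)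
  case 0
  then have "p u = 0" "p v = 0" using depth_eq_0_iff[of u] depth_eq_0_iff[of v] by simp_all
  then show ?case using 0 by (simp add: root_path_eq[of u] root_path_eq[of v])
next
  case (Suc k)
  have parents: "p u \<noteq> 0" "p v \<noteq> 0"
    using Suc.hyps(2) Suc.prems(1) depth_root[of u] depth_root[of v] by auto
  then have depths: "depth (p u) = k" "depth (p v) = k"
    using Suc.hyps(2) Suc.prems(1) depth_parent[of u] depth_parent[of v] by simp_all
  have "p u \<le> p v" using parent_mono Suc.prems by simp
  have paths: "root_path p u = root_path p (p u) @ [u]" "root_path p v = root_path p (p v) @ [v]"
    using parents root_path_eq by simp_all
  show ?case
  proof (cases "p u = p v")
    case True
    then show ?thesis using paths Suc.prems by (simp add: append_less_append_iff)
  next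
    case False
    then have "root_path p (p u) < root_path p (p v)"
      using Suc.hyps(1) parents depths \<open>p u \<le> p v\<close> parent_less[of v] Suc.prems by simp
    then show ?thesis
      using paths depths length_root_path by (simp add: append_less_appendI)
  qed
qed

lemma root_path_less_iff_same_depth:
  assumes "u \<in> {1..n}" "v \<in> {1..n}" "depth u = depth v"
  shows "root_path p u < root_path p v \<longleftrightarrow> u < v"
  using assms root_path_less_if_same_depth[of u v] root_path_less_if_same_depth[of v u]
  by (cases u v rule: linorder_cases) (auto dest: less_asym)

lemma root_path_less_iff_parent:
  assumes "u \<in> {1..n}" "y \<in> {1..n}" "depth y = Suc (depth u)"
  shows "root_path p u < root_path p y \<longleftrightarrow> u \<le> p y"
proof -
  have py: "p y \<noteq> 0" "depth (p y) = depth u" "p y < y"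
    using assms(3) depth_eq_0_iff[of y] depth_parent[of y] parent_less[of y] by simp_all
  have path_y: "root_path p y = root_path p (p y) @ [y]"
    using py root_path_eq by simp
  have lengths: "length (root_path p (p y)) = length (root_path p u)"
    using py length_root_path by simp
  consider "u = p y" | "u < p y" | "p y < u" by linarith
  then show ?thesis
  proof cases
    case 1
    then show ?thesis using path_y less_append_single by simp
  next
    case 2
    then have "root_path p u @ [] < root_path p (p y) @ [y]"
      using root_path_less_iff_same_depth[of u "p y"] assms py lengths
      by (intro append_less_appendI) auto
    then show ?thesis using path_y 2 by simp
  next
    case 3
    then have "root_path p (p y) @ [y] < root_path p u @ []"
      using root_path_less_iff_same_depth[of "p y" u] assms py lengths
      by (intro append_less_appendI) auto
    then show ?thesis using path_y 3 by (auto dest: less_asym)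
  qed
qed

lemma le_parent_iff:
  assumes "u \<in> {1..n}" "y \<in> {1..n}"
  shows "u \<le> p y \<longleftrightarrow>
    depth u + 2 \<le> depth y \<or> (depth y = depth u + 1 \<and> root_path p u < root_path p y)"
  using assms depth_less_if_le_parent[of u y] le_parent_if_depth_ge[of u y]
    root_path_less_iff_parent[OF assms]
  by auto

text \<open>Sorting the vertices by their root paths lists the forest in depth-first preorder.\<close>

definition preorder :: "nat list" where
  "preorder = sort_key (root_path p) [1..<Suc n]"

lemma length_preorder: "length preorder = n"
  unfolding preorder_def by simp

lemma set_preorder: "set preorder = {1..n}"
  unfolding preorder_def by auto

lemma distinct_preorder: "distinct preorder"
  unfolding preorder_def by simp

lemma preorder_less_iff:
  assumes "i < n" "j < n"
  shows "i < j \<longleftrightarrow> root_path p (preorder ! i) < root_path p (preorder ! j)"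
proof -
  have "root_path p (preorder ! i) < root_path p (preorder ! j)" if "i < j" "j < n" for i j
  proof -
    have "sorted (map (root_path p) preorder)" unfolding preorder_def by simp
    then have "root_path p (preorder ! i) \<le> root_path p (preorder ! j)"
      using that length_preorder by (simp add: sorted_iff_nth_mono)
    moreover have "preorder ! i \<noteq> preorder ! j"
      using that distinct_preorder length_preorder by (simp add: nth_eq_iff_index_eq)
    ultimately show ?thesis using root_path_inj by (auto simp: order.order_iff_strict)
  qed
  then show ?thesis
    using assms by (cases i j rule: linorder_cases) (auto dest: less_asym)
qed

lemma parent_index_less:
  assumes "i < n" "p (preorder ! i) \<noteq> 0"
  shows "\<exists>k<i. preorder ! k = p (preorder ! i)"
proof -
  have "preorder ! i \<in> {1..n}"
    using assms(1) nth_mem[of i preorder] length_preorder set_preorder by simp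
  then have "p (preorder ! i) \<in> set preorder"
    using assms(2) parent_less[of "preorder ! i"] set_preorder by simp
  then obtain k where k: "k < n" "preorder ! k = p (preorder ! i)"
    by (metis in_set_conv_nth length_preorder)
  moreover have "root_path p (p (preorder ! i)) < root_path p (preorder ! i)"
    using assms(2) root_path_eq[of "preorder ! i"] less_append_single by simp
  ultimately show ?thesis using preorder_less_iff[OF k(1) assms(1)] by auto
qed

definition depth_seq :: "nat list" where
  "depth_seq = map depth preorder"

text \<open>If \<open>v\<close> were more than one level deeper than its predecessor \<open>u\<close> in preorder, the parent
  of \<open>v\<close> would come strictly before \<open>u\<close> and be at least as deep, so \<open>v\<close> would precede \<open>u\<close>.\<close>

lemma depth_seq_step:
  assumes "0 < i" "i < n"
  shows "depth_seq ! i \<le> depth_seq ! (i - 1) + 1"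
proof (rule ccontr)
  let ?u = "preorder ! (i - 1)" and ?v = "preorder ! i"
  assume "\<not> ?thesis"
  then have deep: "depth ?u + 1 < depth ?v"
    unfolding depth_seq_def using assms length_preorder by simp
  then have pv: "p ?v \<noteq> 0" "depth ?v = Suc (depth (p ?v))"
    using depth_eq_0_iff[of ?v] depth_parent[of ?v] by simp_all
  obtain k where k: "k < i" "preorder ! k = p ?v"
    using parent_index_less pv(1) assms by blast
  with deep pv have "k < i - 1" by (cases "k = i - 1") auto
  then have "root_path p (p ?v) < root_path p ?u"
    using preorder_less_iff[of k "i - 1"] k assms by simp
  then have "root_path p (p ?v) @ [?v] < root_path p ?u @ []"
    using deep pv length_root_path by (intro append_less_appendI) simp_all
  then have "root_path p ?v < root_path p ?u"
    using pv root_path_eq[of ?v] by simp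
  moreover have "root_path p ?u < root_path p ?v"
    using preorder_less_iff[of "i - 1" i] assms by simp
  ultimately show False by (rule less_asym)
qed

lemma area_seq_depth_seq: "area_seq n depth_seq"
  unfolding area_seq_def
proof (intro conjI impI allI)
  show "length depth_seq = n" unfolding depth_seq_def by (simp add: length_preorder)
next
  assume "0 < n"
  then have "p (preorder ! 0) = 0" using parent_index_less[of 0] by auto
  then show "depth_seq ! 0 = 0"
    unfolding depth_seq_def using \<open>0 < n\<close> length_preorder depth_root by simp
next
  fix i assume "0 < i \<and> i < n"
  then show "depth_seq ! i \<le> depth_seq ! (i - 1) + 1" by (intro depth_seq_step) simp_all
qed

lemma bij_betw_preorder_nth:
  "bij_betw (\<lambda>i. preorder ! (i - 1)) {1..n} {1..n}"
proof -
  have "bij_betw (\<lambda>i. i - 1) {1..n} {..<n}"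
    by (rule bij_betw_byWitness[where f' = Suc]) auto
  moreover have "bij_betw ((!) preorder) {..<n} {1..n}"
    using distinct_preorder length_preorder set_preorder by (intro bij_betw_nth) simp_all
  ultimately have "bij_betw ((!) preorder \<circ> (\<lambda>i. i - 1)) {1..n} {1..n}"
    by (rule bij_betw_trans)
  then show ?thesis by (simp add: comp_def)
qed

lemma part_listing_depth_seq: "part_listing n depth_seq (\<lambda>u y. 1 \<le> u \<and> u \<le> p y)"
  unfolding part_listing_def poset_iso_def
proof (intro conjI exI)
  show "length depth_seq = n" unfolding depth_seq_def by (simp add: length_preorder)
  let ?f = "\<lambda>i. preorder ! (i - 1)"
  show "bij_betw ?f {1..n} {1..n}" by (rule bij_betw_preorder_nth)
  show "\<forall>i\<in>{1..n}. \<forall>j\<in>{1..n}. P_of depth_seq i j \<longleftrightarrow> 1 \<le> ?f i \<and> ?f i \<le> p (?f j)"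
  proof (intro ballI)
    fix i j assume ij: "i \<in> {1..n}" "j \<in> {1..n}"
    define u y where "u = ?f i" and "y = ?f j"
    have idx: "i - 1 < n" "j - 1 < n" using ij by auto
    then have mem: "u \<in> {1..n}" "y \<in> {1..n}"
      unfolding u_def y_def using nth_mem length_preorder set_preorder by (metis)+
    have depths: "depth_seq ! (i - 1) = depth u" "depth_seq ! (j - 1) = depth y"
      unfolding depth_seq_def u_def y_def using idx length_preorder by simp_all
    have "P_of depth_seq i j \<longleftrightarrow> part_prec depth_seq (i - 1) (j - 1)"
      using ij by (simp add: P_of_iff_part_prec)
    also have "\<dots> \<longleftrightarrow> depth u + 2 \<le> depth y \<or> (depth y = depth u + 1 \<and> i - 1 < j - 1)"
      unfolding part_prec_def depths using idx \<open>length depth_seq = n\<close> by simp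
    also have "\<dots> \<longleftrightarrow> depth u + 2 \<le> depth y \<or>
        (depth y = depth u + 1 \<and> root_path p u < root_path p y)"
      unfolding u_def y_def using preorder_less_iff[OF idx] by simp
    also have "\<dots> \<longleftrightarrow> 1 \<le> u \<and> u \<le> p y"
      using le_parent_iff[OF mem] mem by simp
    finally show "P_of depth_seq i j \<longleftrightarrow> 1 \<le> ?f i \<and> ?f i \<le> p (?f j)"
      unfolding u_def y_def .
  qed
qed

end

section \<open>Unit interval orders\<close>

definition max_below :: "(nat \<Rightarrow> nat \<Rightarrow> bool) \<Rightarrow> nat \<Rightarrow> nat" where
  "max_below U y = Max (insert 0 {k. U k y})"

lemma unit_interval_order_iff_le_max_below:
  assumes "U \<in> unit_interval_orders n"
  shows "U u y \<longleftrightarrow> 1 \<le> u \<and> u \<le> max_below U y"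
proof -
  obtain x :: "nat \<Rightarrow> real" where
    mono: "\<And>i j. 1 \<le> i \<Longrightarrow> i \<le> j \<Longrightarrow> j \<le> n \<Longrightarrow> x i \<le> x j" and
    U: "\<And>i j. U i j \<longleftrightarrow> i \<in> {1..n} \<and> j \<in> {1..n} \<and> x i + 1 < x j"
    using assms unfolding unit_interval_orders_def by blast
  have fin: "finite (insert 0 {k. U k y})"
    by (rule finite_subset[of _ "{0..n}"]) (auto simp: U)
  show ?thesis
  proof
    assume "U u y"
    then show "1 \<le> u \<and> u \<le> max_below U y"
      unfolding max_below_def using fin U by (auto intro: Max_ge)
  next
    assume u: "1 \<le> u \<and> u \<le> max_below U y"
    have "max_below U y \<in> insert 0 {k. U k y}"
      unfolding max_below_def using fin by (rule Max_in) simp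
    with u have "U (max_below U y) y" by auto
    then have "max_below U y \<in> {1..n}" "y \<in> {1..n}" "x (max_below U y) + 1 < x y"
      using U by simp_all
    moreover have "x u \<le> x (max_below U y)"
      using mono u \<open>max_below U y \<in> {1..n}\<close> by simp
    ultimately show "U u y" using u U by simp
  qed
qed

lemma parent_forest_max_below:
  assumes "U \<in> unit_interval_orders n"
  shows "parent_forest n (max_below U)"
proof -
  obtain x :: "nat \<Rightarrow> real" where
    mono: "\<And>i j. 1 \<le> i \<Longrightarrow> i \<le> j \<Longrightarrow> j \<le> n \<Longrightarrow> x i \<le> x j" and
    U: "\<And>i j. U i j \<longleftrightarrow> i \<in> {1..n} \<and> j \<in> {1..n} \<and> x i + 1 < x j"
    using assms unfolding unit_interval_orders_def by blast
  have below: "max_below U y \<in> {1..n}" "y \<in> {1..n}" "x (max_below U y) + 1 < x y"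
    if "0 < max_below U y" for y
    using unit_interval_order_iff_le_max_below[OF assms, of "max_below U y" y] that U by simp_all
  show ?thesis
  proof
    fix y assume "0 < max_below U y"
    note b = below[OF this]
    show "max_below U y < y"
    proof (rule ccontr)
      assume "\<not> max_below U y < y"
      then have "x y \<le> x (max_below U y)" using mono b by simp
      with b show False by simp
    qed
  next
    fix y y' assume y: "1 \<le> y" "y \<le> y'" "y' \<le> n"
    show "max_below U y \<le> max_below U y'"
    proof (cases "max_below U y = 0")
      case False
      have "x y \<le> x y'" using mono[OF y] .
      with below[of y] False y have "U (max_below U y) y'" by (simp add: U)
      then show ?thesis
        using unit_interval_order_iff_le_max_below[OF assms, of "max_below U y" y'] by simp
    qed simp
  qed
qed

theorem mainTheorem11:
  fixes n :: nat and U :: "nat \<Rightarrow> nat \<Rightarrow> bool"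
  assumes "U \<in> unit_interval_orders n"
  shows "part_listing n (p_tilde n U) U \<and>
         (\<forall>w. part_listing n w U \<and> w \<noteq> p_tilde n U \<longrightarrow> grevlex_less (p_tilde n U) w)"
proof -
  interpret parent_forest n "max_below U"
    using assms by (rule parent_forest_max_below)
  have "(\<lambda>u y. 1 \<le> u \<and> u \<le> max_below U y) = U"
    by (intro ext) (simp add: unit_interval_order_iff_le_max_below[OF assms])
  then have listing: "part_listing n depth_seq U"
    using part_listing_depth_seq by simp
  have "p_tilde n U = depth_seq"
    using area_seq_depth_seq listing by (rule p_tilde_eqI)
  then show ?thesis
    using listing area_part_listing_minimal[OF area_seq_depth_seq listing] by auto
qed

end
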